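(* There is an absolute constant $K$ such that the following holds. Let $C\ge1$, let $I$ be an instance of dynamic bin packing with migration delays in which every item has duration at least $1$, run Algorithm 3 (described in the context) on $I$, and let $\tilde I_s$ be the instance of small parts defined in the context. Then $\mathrm{FirstFit}(\tilde I_s)\le K\sqrt{C}\cdot\mathrm{OPT}(I)$.
   Context: Dynamic bin packing with migration delays: bins have capacity $1$; items arrive online at times $a_i\ge0$ with size $s_i\in[0,1]$ and initial duration $d_i>0$ (unknown at arrival). Each migration of an item (moving it to another bin) increases its duration by $C$. A bin is open while nonempty. For an instance $J$ (a set of items with arrival times, sizes, durations), $\mathrm{FirstFit}(J)$ is the total active time $\int_0^\infty(\text{number of open bins at } t)\,dt$ of the FirstFit algorithm on $J$ (each arriving item goes into the earliest-opened open bin with enough remaining capacity, else a new bin; no migrations), and $\mathrm{OPT}(J)=\int_0^\infty\mathrm{OPT}_t\,dt$ with $\mathrm{OPT}_t$ the minimum number of unit bins needed to pack the items of $J$ present at time $t$. Algorithm 3: maintain two disjoint pools of bins $I_s$ and $I_b$. Each arriving item is placed into $I_s$ by FirstFit (within that pool). When an item has been in $I_s$ for exactly $\sqrt{C}$ time, it is migrated into $I_b$ by FirstFit. When an item has been in $I_b$ for exactly $C+\sqrt{C}$ time since its most recent migration, it is migrated into $I_b$ by FirstFit. Small parts: for each item $i$ of $I$, let $t_1$ be the time of its first migration by Algorithm 3, if any. The small part of $i$ is an item of size $s_i$, arrival time $a_i$, and duration $t_1-a_i$ if $i$ is ever migrated and $d_i$ otherwise. $\tilde I_s$ is the instance consisting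 of all small parts. *)

theory Defs
  imports "HOL-Analysis.Analysis"
begin

type_synonym item = "real \<times> real \<times> real"

definition arr :: "item \<Rightarrow> real" where "arr x = fst x"
definition sz  :: "item \<Rightarrow> real" where "sz x = fst (snd x)"
definition dur :: "item \<Rightarrow> real" where "dur x = snd (snd x)"

definition present :: "item \<Rightarrow> real \<Rightarrow> bool" where
  "present x t \<longleftrightarrow> arr x \<le> t \<and> t < arr x + dur x"

definition valid_instance :: "item list \<Rightarrow> bool" where
  "valid_instance J \<longleftrightarrow> (\<forall>x\<in>set J. 0 \<le> arr x \<and> 0 \<le> sz x \<and> sz x \<le> 1 \<and> 0 < dur x)"

text \<open>Bins are numbered 0,1,2,... in order of opening; a bin is open at
  time t iff some item assigned to it is present at t.\<close>
definition ff_step :: "(item \<times> nat) list \<Rightarrow> item \<Rightarrow> (item \<times> nat) list" where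
  "ff_step A x =
    (let t = arr x;
         openb = {b. \<exists>y. (y, b) \<in> set A \<and> present y t};
         load = (\<lambda>b. sum_list (map (sz \<circ> fst) (filter (\<lambda>(y, c). c = b \<and> present y t) A)));
         cand = {b \<in> openb. load b + sz x \<le> 1};
         b = (if cand = {} then card (snd ` set A) else Min cand)
     in A @ [(x, b)])"

text \<open>Items are processed in order of arrival (ties broken by position in the list,
  since sort_key is stable).\<close>
definition ff_assign :: "item list \<Rightarrow> (item \<times> nat) list" where
  "ff_assign J = fold (\<lambda>x A. ff_step A x) (sort_key arr J) []"

definition ff_open_bins :: "item list \<Rightarrow> real \<Rightarrow> nat" where
  "ff_open_bins J t = card {b. \<exists>y. (y, b) \<in> set (ff_assign J) \<and> present y t}"

definition FirstFit :: "item list \<Rightarrow> real" where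
  "FirstFit J = (\<integral>t. real (ff_open_bins J t) \<partial>lborel)"

definition OPT_t :: "item list \<Rightarrow> real \<Rightarrow> nat" where
  "OPT_t J t = (LEAST k. \<exists>f :: nat \<Rightarrow> nat.
      (\<forall>i<length J. present (J ! i) t \<longrightarrow> f i < k) \<and>
      (\<forall>b<k. (\<Sum>i | i < length J \<and> present (J ! i) t \<and> f i = b. sz (J ! i)) \<le> 1))"

definition OPT :: "item list \<Rightarrow> real" where
  "OPT J = (\<integral>t. real (OPT_t J t) \<partial>lborel)"

text \<open>Algorithm 3: an item sits in pool I_s from its arrival until it has been there for
  exactly sqrt C time, at which moment it is (first) migrated -- provided it is still present,
  i.e. its (so far unmodified) duration exceeds sqrt C. Before the first migration the
  duration of an item is its initial duration, so the time of the first migration of item x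
  is determined as follows (None = never migrated).\<close>
definition first_migration :: "real \<Rightarrow> item \<Rightarrow> real option" where
  "first_migration C x = (if sqrt C < dur x then Some (arr x + sqrt C) else None)"

definition small_part :: "real \<Rightarrow> item \<Rightarrow> item" where
  "small_part C x = (case first_migration C x of
       Some t1 \<Rightarrow> (arr x, sz x, t1 - arr x)
     | None \<Rightarrow> (arr x, sz x, dur x))"

definition small_parts :: "real \<Rightarrow> item list \<Rightarrow> item list" where
  "small_parts C J = map (small_part C) J"

end

theory Submission
  imports Defs
begin

text \<open>At a time t, the bins that FirstFit keeps open for the small parts either hold an item
  larger than 1/2 -- at most OPT_t of them -- or only smaller items. Among the latter, let p be
  a small item present at t in the highest such bin. Every lower such bin existed and, since
  bins never reopen and items arrive in order, was open when p arrived; it could not take p,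
  so it was more than half full. Hence there are at most 1 + 2 W(a_p) of them, W(a_p) being
  the total size present at p's arrival a_p. A small part lives at most sqrt C, so
  t - sqrt C < a_p, and W(a_p) is at most the total size of the items of I whose lifetimes,
  stretched by sqrt C, contain t. Integrating,
  FirstFit(I_s) \<le> 2 OPT(I) + 2 \<Sigma> s_i (d_i + sqrt C) \<le> (4 + 2 sqrt C) OPT(I),
  using d_i \<ge> 1 and \<Sigma> s_i d_i \<le> OPT(I).\<close>

definition ff_run :: "item list \<Rightarrow> (item \<times> nat) list" where
  "ff_run xs = fold (\<lambda>x A. ff_step A x) xs []"

definition open_bins :: "(item \<times> nat) list \<Rightarrow> real \<Rightarrow> nat set" where
  "open_bins A t = {b. \<exists>y. (y, b) \<in> set A \<and> present y t}"

definition bin_load :: "(item \<times> nat) list \<Rightarrow> real \<Rightarrow> nat \<Rightarrow> real" where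
  "bin_load A t b = sum_list (map (sz \<circ> fst) (filter (\<lambda>(y, c). c = b \<and> present y t) A))"

lemma ff_step_eq:
  "ff_step A x = A @ [(x, let cand = {b \<in> open_bins A (arr x). bin_load A (arr x) b + sz x \<le> 1}
     in if cand = {} then card (snd ` set A) else Min cand)]"
  unfolding ff_step_def open_bins_def bin_load_def Let_def by simp

lemma ff_run_Nil [simp]: "ff_run [] = []"
  by (simp add: ff_run_def)

lemma ff_run_snoc: "ff_run (xs @ [x]) = ff_step (ff_run xs) x"
  by (simp add: ff_run_def)

lemma map_fst_ff_run [simp]: "map fst (ff_run xs) = xs"
  by (induction xs rule: rev_induct) (simp_all add: ff_run_snoc ff_step_eq)

lemma length_ff_run [simp]: "length (ff_run xs) = length xs"
  by (metis length_map map_fst_ff_run)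

lemma take_ff_run: "take p (ff_run xs) = ff_run (take p xs)"
proof (induction xs rule: rev_induct)
  case (snoc x xs)
  then show ?case
    by (cases "p \<le> length xs") (simp_all add: ff_run_snoc ff_step_eq)
qed simp

lemma open_bins_subset: "open_bins A t \<subseteq> snd ` set A"
  unfolding open_bins_def by force

lemma finite_open_bins: "finite (open_bins A t)"
  using open_bins_subset finite_subset by blast

text \<open>The new bin opened by ff_step is numbered card (snd ` set A); hypothesis used makes it
  a fresh bin.\<close>
lemma ff_step_choice:
  assumes used: "snd ` set A = {..< card (snd ` set A)}"
    and step: "ff_step A x = A @ [(x, b)]"
  shows "b \<le> card (snd ` set A)"
    and "b \<in> snd ` set A \<Longrightarrow> b \<in> open_bins A (arr x)"
    and "b' \<in> open_bins A (arr x) \<Longrightarrow> b' < b \<Longrightarrow> 1 < bin_load A (arr x) b' + sz x"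
proof -
  define cand where "cand = {b \<in> open_bins A (arr x). bin_load A (arr x) b + sz x \<le> 1}"
  have "finite cand"
    using finite_open_bins cand_def by auto
  have b: "b = (if cand = {} then card (snd ` set A) else Min cand)"
    using step unfolding ff_step_eq cand_def Let_def by simp
  have cand_used: "cand \<subseteq> {..< card (snd ` set A)}"
    using open_bins_subset used cand_def by blast
  show "b \<le> card (snd ` set A)"
    using b cand_used Min_in[OF \<open>finite cand\<close>] by (auto split: if_splits)
  show "b \<in> open_bins A (arr x)" if "b \<in> snd ` set A"
    using that used b Min_in[OF \<open>finite cand\<close>] cand_def by (auto split: if_splits)
  show "1 < bin_load A (arr x) b' + sz x" if "b' \<in> open_bins A (arr x)" "b' < b"
  proof (rule ccontr)
    assume "\<not> ?thesis"
    then have "b' \<in> cand"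
      using that cand_def by auto
    then show False
      using b that \<open>finite cand\<close> by (auto split: if_splits dest: Min_le)
  qed
qed

lemma ff_run_bins_initial: "snd ` set (ff_run xs) = {..< card (snd ` set (ff_run xs))}"
proof (induction xs rule: rev_induct)
  case (snoc x xs)
  obtain b where step: "ff_step (ff_run xs) x = ff_run xs @ [(x, b)]"
    by (simp add: ff_step_eq)
  have "b \<le> card (snd ` set (ff_run xs))"
    by (rule ff_step_choice(1)[OF snoc step])
  then have "insert b {..< card (snd ` set (ff_run xs))}
      = {..< card (insert b {..< card (snd ` set (ff_run xs))})}"
    by (cases "b = card (snd ` set (ff_run xs))") (auto simp: insert_absorb lessThan_Suc)
  then show ?case
    using snoc by (simp add: ff_run_snoc step)
qed simp

definition ff_bin :: "item list \<Rightarrow> nat \<Rightarrow> nat" where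
  "ff_bin L q = snd (ff_run L ! q)"

lemma nth_ff_run: "q < length L \<Longrightarrow> ff_run L ! q = (L ! q, ff_bin L q)"
  unfolding ff_bin_def by (metis length_ff_run map_fst_ff_run nth_map prod.collapse)

lemma set_ff_run_take:
  "p \<le> length L \<Longrightarrow> set (ff_run (take p L)) = (\<lambda>q. (L ! q, ff_bin L q)) ` {..<p}"
  unfolding take_ff_run[symmetric] set_conv_nth by (force simp: nth_ff_run)

lemma open_bins_ff_run_take:
  "p \<le> length L \<Longrightarrow> open_bins (ff_run (take p L)) s = {ff_bin L q |q. q < p \<and> present (L ! q) s}"
  unfolding open_bins_def set_ff_run_take by blast

lemma ff_step_ff_run_take:
  "p < length L \<Longrightarrow> ff_step (ff_run (take p L)) (L ! p) = ff_run (take p L) @ [(L ! p, ff_bin L p)]"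
  by (metis ff_run_snoc length_ff_run nth_ff_run take_Suc_conv_app_nth take_ff_run)

lemma ff_bin_below_used:
  assumes "p < length L" "b < ff_bin L p"
  shows "\<exists>q<p. ff_bin L q = b"
proof -
  let ?A = "ff_run (take p L)"
  have "ff_bin L p \<le> card (snd ` set ?A)"
    using ff_step_choice(1)[OF ff_run_bins_initial ff_step_ff_run_take] assms(1) .
  then have "b \<in> snd ` set ?A"
    using assms(2) ff_run_bins_initial[of "take p L"] by auto
  then show ?thesis
    using assms(1) by (auto simp: set_ff_run_take)
qed

lemma ff_bin_reused_open:
  assumes "p < length L" "q < p" "ff_bin L q = ff_bin L p"
  shows "\<exists>q'<p. ff_bin L q' = ff_bin L p \<and> present (L ! q') (arr (L ! p))"
proof -
  have "ff_bin L p \<in> snd ` set (ff_run (take p L))"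
    using assms by (simp add: set_ff_run_take image_image) (metis lessThan_iff rev_image_eqI)
  then have "ff_bin L p \<in> open_bins (ff_run (take p L)) (arr (L ! p))"
    by (rule ff_step_choice(2)[OF ff_run_bins_initial ff_step_ff_run_take[OF assms(1)]])
  then show ?thesis
    using assms(1) by (auto simp: open_bins_ff_run_take)
qed

lemma ff_bin_skipped_full:
  assumes "p < length L" "q < p" "ff_bin L q < ff_bin L p" "present (L ! q) (arr (L ! p))"
  shows "1 < bin_load (ff_run (take p L)) (arr (L ! p)) (ff_bin L q) + sz (L ! p)"
proof -
  have "ff_bin L q \<in> open_bins (ff_run (take p L)) (arr (L ! p))"
    using assms by (auto simp: open_bins_ff_run_take)
  from ff_step_choice(3)[OF ff_run_bins_initial ff_step_ff_run_take[OF assms(1)] this assms(3)]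
  show ?thesis .
qed

lemma ff_bin_open_at_arrival:
  assumes sorted: "sorted (map arr L)" and p: "p < length L" and q: "q < length L"
    and below: "ff_bin L q < ff_bin L p" and "present (L ! q) t" and "arr (L ! p) \<le> t"
  shows "\<exists>q'<p. ff_bin L q' = ff_bin L q \<and> present (L ! q') (arr (L ! p))"
proof (cases "q < p")
  case True
  then have "arr (L ! q) \<le> arr (L ! p)"
    using sorted_nth_mono[OF sorted, of q p] p by simp
  then show ?thesis
    using True assms unfolding present_def by auto
next
  case False
  let ?b = "ff_bin L q"
  text \<open>Bin b already held an item before p. The first item r after p put into b therefore found
    b open, i.e. holding an item q' < p still present at arr r \<ge> arr p.\<close>
  define r where "r = (LEAST r. p \<le> r \<and> r < length L \<and> ff_bin L r = ?b)"
  have r: "p \<le> r" "r < length L" "ff_bin L r = ?b"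
    using LeastI[of "\<lambda>r. p \<le> r \<and> r < length L \<and> ff_bin L r = ?b" q] False q
    unfolding r_def by auto
  have r_least: "r \<le> r'" if "p \<le> r'" "r' < length L" "ff_bin L r' = ?b" for r'
    using that unfolding r_def by (simp add: Least_le)
  have "p < r"
    using r below by (metis le_neq_implies_less less_irrefl)
  obtain q0 where "q0 < p" "ff_bin L q0 = ff_bin L r"
    using ff_bin_below_used[OF p below] r(3) by auto
  then obtain q' where q': "q' < r" "ff_bin L q' = ?b" "present (L ! q') (arr (L ! r))"
    using ff_bin_reused_open[OF r(2), of q0] \<open>p < r\<close> r(3) by auto
  have "q' < p"
  proof (rule ccontr)
    assume "\<not> q' < p"
    then have "r \<le> q'"
      using r_least q' r(2) by simp
    with q'(1) show False
      by simp
  qed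
  moreover have "arr (L ! q') \<le> arr (L ! p)" "arr (L ! p) \<le> arr (L ! r)"
    using sorted_nth_mono[OF sorted, of q' p] sorted_nth_mono[OF sorted, of p r] \<open>q' < p\<close> \<open>p < r\<close> r(2)
    by simp_all
  ultimately show ?thesis
    using q' unfolding present_def by auto
qed

definition load :: "item list \<Rightarrow> real \<Rightarrow> real" where
  "load J t = (\<Sum>x\<leftarrow>J. if present x t then sz x else 0)"

lemma load_take_le:
  assumes "\<forall>x\<in>set J. 0 \<le> sz x"
  shows "load (take p J) t \<le> load J t"
proof -
  have "load J t = load (take p J) t + load (drop p J) t"
    unfolding load_def by (simp flip: sum_list_append map_append)
  moreover have "0 \<le> load (drop p J) t"
    using assms unfolding load_def by (intro sum_list_nonneg) (auto dest: in_set_dropD)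
  ultimately show ?thesis
    by simp
qed

lemma bin_load_Cons:
  "bin_load (a # A) t b = (if snd a = b \<and> present (fst a) t then sz (fst a) else 0) + bin_load A t b"
  unfolding bin_load_def by (cases a) simp

lemma sum_bin_load_le:
  assumes "\<forall>y\<in>set (map fst A). 0 \<le> sz y" and "finite B"
  shows "(\<Sum>b\<in>B. bin_load A t b) \<le> load (map fst A) t"
  using assms(1)
proof (induction A)
  case Nil
  then show ?case by (simp add: bin_load_def load_def)
next
  case (Cons a A)
  let ?s = "if present (fst a) t then sz (fst a) else 0"
  have "(\<Sum>b\<in>B. if snd a = b \<and> present (fst a) t then sz (fst a) else 0)
      = (\<Sum>b\<in>B. if snd a = b then ?s else 0)"
    by (intro sum.cong) auto
  also have "\<dots> = (if snd a \<in> B then ?s else 0)"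
    using assms(2) by (rule sum.delta')
  also have "\<dots> \<le> ?s"
    using Cons.prems by auto
  finally have "(\<Sum>b\<in>B. if snd a = b \<and> present (fst a) t then sz (fst a) else 0) \<le> ?s" .
  then have "(\<Sum>b\<in>B. bin_load (a # A) t b) \<le> ?s + load (map fst A) t"
    using Cons by (simp add: bin_load_Cons sum.distrib add_mono)
  also have "\<dots> = load (map fst (a # A)) t"
    by (simp add: load_def)
  finally show ?case .
qed

definition ff_open :: "item list \<Rightarrow> real \<Rightarrow> nat set" where
  "ff_open L t = {ff_bin L q |q. q < length L \<and> present (L ! q) t}"

lemma ff_open_bins_eq: "ff_open_bins J t = card (ff_open (sort_key arr J) t)"
proof -
  have "ff_assign J = ff_run (sort_key arr J)"
    by (simp add: ff_assign_def ff_run_def)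
  then show ?thesis
    using open_bins_ff_run_take[of "length (sort_key arr J)" "sort_key arr J" t]
    unfolding ff_open_bins_def ff_open_def open_bins_def by simp
qed

lemma ff_open_below_half_full:
  assumes sorted: "sorted (map arr L)" and p: "p < length L" "present (L ! p) t" "sz (L ! p) \<le> 1/2"
    and b: "b \<in> ff_open L t" "b < ff_bin L p"
  shows "1/2 < bin_load (ff_run (take p L)) (arr (L ! p)) b"
proof -
  obtain q where q: "q < length L" "ff_bin L q = b" "present (L ! q) t"
    using b(1) unfolding ff_open_def by blast
  have "arr (L ! p) \<le> t"
    using p(2) unfolding present_def by simp
  then obtain q' where "q' < p" "ff_bin L q' = b" "present (L ! q') (arr (L ! p))"
    using ff_bin_open_at_arrival[OF sorted p(1) q(1)] q b(2) by auto
  then have "1 < bin_load (ff_run (take p L)) (arr (L ! p)) b + sz (L ! p)"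
    using ff_bin_skipped_full[OF p(1)] b(2) by blast
  then show ?thesis
    using p(3) by simp
qed

lemma card_ff_open_below_le:
  assumes sorted: "sorted (map arr L)" and nonneg: "\<forall>x\<in>set L. 0 \<le> sz x"
    and p: "p < length L" "present (L ! p) t" "sz (L ! p) \<le> 1/2"
  shows "card {b \<in> ff_open L t. b < ff_bin L p} \<le> 2 * load L (arr (L ! p))"
proof -
  let ?B = "{b \<in> ff_open L t. b < ff_bin L p}"
  let ?A = "ff_run (take p L)"
  have "finite ?B"
    by simp
  have "card ?B / 2 = (\<Sum>b\<in>?B. 1/2)"
    by simp
  also have "\<dots> \<le> (\<Sum>b\<in>?B. bin_load ?A (arr (L ! p)) b)"
    using ff_open_below_half_full[OF sorted p] by (intro sum_mono) (simp add: less_imp_le)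
  also have "\<dots> \<le> load (map fst ?A) (arr (L ! p))"
    using nonneg \<open>finite ?B\<close> by (intro sum_bin_load_le) (auto dest: in_set_takeD)
  also have "\<dots> \<le> load L (arr (L ! p))"
    using nonneg by (simp add: load_take_le)
  finally show ?thesis
    by simp
qed

definition big_count :: "item list \<Rightarrow> real \<Rightarrow> nat" where
  "big_count J t = length (filter (\<lambda>x. present x t \<and> 1/2 < sz x) J)"

lemma card_ff_bins_big_le:
  "card {ff_bin L q |q. q < length L \<and> present (L ! q) t \<and> 1/2 < sz (L ! q)} \<le> big_count L t"
proof -
  have "{ff_bin L q |q. q < length L \<and> present (L ! q) t \<and> 1/2 < sz (L ! q)}
      = ff_bin L ` {q. q < length L \<and> present (L ! q) t \<and> 1/2 < sz (L ! q)}"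
    by blast
  then show ?thesis
    by (simp add: card_image_le big_count_def length_filter_conv_card)
qed

lemma card_ff_open_le:
  assumes sorted: "sorted (map arr L)" and nonneg: "\<forall>x\<in>set L. 0 \<le> sz x"
  shows "card (ff_open L t) \<le> big_count L t \<or>
    (\<exists>x\<in>set L. present x t \<and>
       real (card (ff_open L t)) \<le> real (big_count L t) + 1 + 2 * load L (arr x))"
proof -
  define big where "big = {ff_bin L q |q. q < length L \<and> present (L ! q) t \<and> 1/2 < sz (L ! q)}"
  define small where "small = {ff_bin L q |q. q < length L \<and> present (L ! q) t \<and> sz (L ! q) \<le> 1/2}"
  have "ff_open L t = big \<union> small"
    unfolding ff_open_def big_def small_def by auto (metis not_le)
  then have card_open: "card (ff_open L t) \<le> card big + card small"
    by (simp add: card_Un_le)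
  have card_big: "card big \<le> big_count L t"
    unfolding big_def by (rule card_ff_bins_big_le)
  show ?thesis
  proof (cases "small = {}")
    case True
    then show ?thesis
      using card_open card_big by simp
  next
    case False
    have "finite small"
      unfolding small_def by simp
    define m where "m = Max small"
    have "m \<in> small" "\<forall>b\<in>small. b \<le> m"
      using \<open>finite small\<close> False unfolding m_def by simp_all
    then obtain p where p: "p < length L" "present (L ! p) t" "sz (L ! p) \<le> 1/2"
      and max: "\<forall>b\<in>small. b \<le> ff_bin L p"
      unfolding small_def by auto
    let ?B = "{b \<in> ff_open L t. b < ff_bin L p}"
    have "small \<subseteq> insert (ff_bin L p) ?B"
      using max unfolding small_def ff_open_def by fastforce
    then have "card small \<le> card (insert (ff_bin L p) ?B)"
      by (intro card_mono) (simp_all add: ff_open_def)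
    also have "\<dots> \<le> Suc (card ?B)"
      by (simp add: card_insert_if ff_open_def)
    finally have "card small \<le> Suc (card ?B)" .
    moreover have "card ?B \<le> 2 * load L (arr (L ! p))"
      by (rule card_ff_open_below_le[OF sorted nonneg p])
    ultimately have "real (card (ff_open L t)) \<le> real (big_count L t) + 1 + 2 * load L (arr (L ! p))"
      using card_open card_big by linarith
    then show ?thesis
      using p by auto
  qed
qed

definition packs :: "item list \<Rightarrow> real \<Rightarrow> nat \<Rightarrow> (nat \<Rightarrow> nat) \<Rightarrow> bool" where
  "packs J t k f \<longleftrightarrow> (\<forall>i<length J. present (J ! i) t \<longrightarrow> f i < k) \<and>
      (\<forall>b<k. (\<Sum>i | i < length J \<and> present (J ! i) t \<and> f i = b. sz (J ! i)) \<le> 1)"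

lemma OPT_t_eq_Least: "OPT_t J t = (LEAST k. \<exists>f. packs J t k f)"
  unfolding OPT_t_def packs_def ..

lemma packs_id:
  assumes "valid_instance J"
  shows "packs J t (length J) id"
proof -
  have "(\<Sum>i | i < length J \<and> present (J ! i) t \<and> i = b. sz (J ! i)) \<le> 1" if "b < length J" for b
  proof -
    have "(\<Sum>i | i < length J \<and> present (J ! i) t \<and> i = b. sz (J ! i)) \<le> (\<Sum>i\<in>{b}. sz (J ! i))"
      using assms that unfolding valid_instance_def by (intro sum_mono2) auto
    also have "\<dots> \<le> 1"
      using assms that unfolding valid_instance_def by simp
    finally show ?thesis .
  qed
  then show ?thesis
    unfolding packs_def by simp
qed

lemma packs_OPT_t:
  assumes "valid_instance J"
  obtains f where "packs J t (OPT_t J t) f"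
  using LeastI_ex[of "\<lambda>k. \<exists>f. packs J t k f"] packs_id[OF assms]
  unfolding OPT_t_eq_Least by blast

lemma OPT_t_le_length: "valid_instance J \<Longrightarrow> OPT_t J t \<le> length J"
  unfolding OPT_t_eq_Least by (blast intro: Least_le packs_id)

lemma OPT_t_eq_0: "\<forall>x\<in>set J. \<not> present x t \<Longrightarrow> OPT_t J t = 0"
  unfolding OPT_t_eq_Least packs_def by (intro Least_eq_0) auto

lemma OPT_t_pos:
  assumes "valid_instance J" "x \<in> set J" "present x t"
  shows "0 < OPT_t J t"
proof -
  obtain i where "i < length J" "J ! i = x"
    using assms(2) by (auto simp: in_set_conv_nth)
  moreover obtain f where "packs J t (OPT_t J t) f"
    using packs_OPT_t[OF assms(1)] .
  ultimately show ?thesis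
    using assms(3) unfolding packs_def by fastforce
qed

lemma big_count_le_OPT_t:
  assumes "valid_instance J"
  shows "big_count J t \<le> OPT_t J t"
proof -
  let ?P = "{i. i < length J \<and> present (J ! i) t \<and> 1/2 < sz (J ! i)}"
  obtain f where f: "packs J t (OPT_t J t) f"
    using packs_OPT_t[OF assms] .
  have nonneg: "0 \<le> sz (J ! i)" if "i < length J" for i
    using assms that unfolding valid_instance_def by auto
  text \<open>Two items larger than one half never share a bin.\<close>
  have "inj_on f ?P"
  proof (rule inj_onI, rule ccontr)
    fix i j assume ij: "i \<in> ?P" "j \<in> ?P" "f i = f j" "i \<noteq> j"
    have "sz (J ! i) + sz (J ! j) = (\<Sum>k\<in>{i, j}. sz (J ! k))"
      using ij(4) by simp
    also have "\<dots> \<le> (\<Sum>k | k < length J \<and> present (J ! k) t \<and> f k = f i. sz (J ! k))"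
      using ij nonneg by (intro sum_mono2) auto
    also have "\<dots> \<le> 1"
      using f ij(1) unfolding packs_def by simp
    finally show False
      using ij(1,2) by simp
  qed
  moreover have "f ` ?P \<subseteq> {..< OPT_t J t}"
    using f unfolding packs_def by auto
  ultimately have "card ?P \<le> OPT_t J t"
    using card_inj_on_le[of f ?P "{..< OPT_t J t}"] by simp
  then show ?thesis
    by (simp add: big_count_def length_filter_conv_card)
qed

lemma load_le_OPT_t:
  assumes "valid_instance J"
  shows "load J t \<le> OPT_t J t"
proof -
  let ?P = "{i. i < length J \<and> present (J ! i) t}"
  obtain f where f: "packs J t (OPT_t J t) f"
    using packs_OPT_t[OF assms] .
  have "load J t = (\<Sum>i\<in>?P. sz (J ! i))"
    unfolding load_def sum_list_sum_nth by (simp add: sum.If_cases atLeast0LessThan Int_def)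
  also have "\<dots> = (\<Sum>b<OPT_t J t. \<Sum>i | i \<in> ?P \<and> f i = b. sz (J ! i))"
    using f unfolding packs_def by (intro sum.group[symmetric]) auto
  also have "\<dots> \<le> (\<Sum>b<OPT_t J t. 1)"
    using f unfolding packs_def by (intro sum_mono) simp
  finally show ?thesis
    by simp
qed

lemma has_bochner_integral_lifetimes:
  assumes "\<forall>x\<in>set J. 0 \<le> dur x + m"
  shows "has_bochner_integral lborel (\<lambda>t. \<Sum>x\<leftarrow>J. c x * indicator {arr x ..< arr x + dur x + m} t)
           (\<Sum>x\<leftarrow>J. c x * (dur x + m))"
  using assms
proof (induction J)
  case (Cons x J)
  have "has_bochner_integral lborel (indicator {arr x ..< arr x + dur x + m}) (dur x + m)"
    using Cons.prems has_bochner_integral_real_indicator[of "{arr x ..< arr x + dur x + m}" lborel]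
    by simp
  then have "has_bochner_integral lborel (\<lambda>t. c x * indicator {arr x ..< arr x + dur x + m} t)
      (c x * (dur x + m))"
    by (rule has_bochner_integral_mult_right)
  from has_bochner_integral_add[OF this Cons.IH] Cons.prems show ?case
    by simp
qed auto

lemma load_eq_lifetimes: "load J t = (\<Sum>x\<leftarrow>J. sz x * indicator {arr x ..< arr x + dur x} t)"
  unfolding load_def present_def by (intro arg_cong[where f = sum_list] map_cong) auto

lemma measurable_presence: "(\<lambda>t. map (\<lambda>x. present x t) J) \<in> borel \<rightarrow>\<^sub>M count_space UNIV"
proof (induction J)
  case (Cons x J)
  have "(\<lambda>t. present x t) \<in> borel \<rightarrow>\<^sub>M count_space UNIV"
    unfolding present_def by measurable
  moreover have "(\<lambda>t. b # map (\<lambda>y. present y t) J) \<in> borel \<rightarrow>\<^sub>M count_space UNIV" for b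
    using measurable_compose[OF Cons.IH measurable_count_space] .
  ultimately have "(\<lambda>t. (\<lambda>b t. b # map (\<lambda>y. present y t) J) (present x t) t) \<in> borel \<rightarrow>\<^sub>M count_space UNIV"
    by (rule measurable_compose_countable[rotated])
  then show ?case
    by simp
qed simp

lemma OPT_t_cong:
  assumes "map (\<lambda>x. present x s) J = map (\<lambda>x. present x t) J"
  shows "OPT_t J s = OPT_t J t"
proof -
  have "present (J ! i) s = present (J ! i) t" if "i < length J" for i
    using assms that by (metis nth_map)
  then show ?thesis
    unfolding OPT_t_def by (simp cong: conj_cong)
qed

lemma borel_measurable_OPT_t: "(\<lambda>t. real (OPT_t J t)) \<in> borel_measurable borel"
proof -
  let ?v = "\<lambda>t. map (\<lambda>x. present x t) J"
  text \<open>OPT_t J t depends on t only through the set of items present at t.\<close>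
  have "?v (inv ?v (?v t)) = ?v t" for t
    by (rule f_inv_into_f) (rule rangeI)
  then have "OPT_t J (inv ?v (?v t)) = OPT_t J t" for t
    by (rule OPT_t_cong)
  moreover have "(\<lambda>t. real (OPT_t J (inv ?v (?v t)))) \<in> borel_measurable borel"
    using measurable_compose[OF measurable_presence borel_measurable_count_space] .
  ultimately show ?thesis
    by simp
qed

lemma integrable_OPT_t:
  assumes valid: "valid_instance J"
  shows "integrable lborel (\<lambda>t. real (OPT_t J t))"
proof (rule Bochner_Integration.integrable_bound)
  let ?g = "\<lambda>t. \<Sum>x\<leftarrow>J. real (length J) * indicator {arr x ..< arr x + dur x + 0} t"
  have "\<forall>x\<in>set J. 0 \<le> dur x + 0"
    using valid unfolding valid_instance_def by auto
  then show "integrable lborel ?g"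
    by (rule integrable.intros[OF has_bochner_integral_lifetimes])
  show "(\<lambda>t. real (OPT_t J t)) \<in> borel_measurable lborel"
    using borel_measurable_OPT_t by simp
  have "OPT_t J t \<le> ?g t" for t
  proof (cases "\<exists>x\<in>set J. present x t")
    case True
    then obtain x where x: "x \<in> set J" "present x t"
      by blast
    have "real (OPT_t J t) \<le> real (length J) * indicator {arr x ..< arr x + dur x + 0} t"
      using OPT_t_le_length[OF valid] x(2) unfolding present_def by simp
    also have "\<dots> \<le> ?g t"
      using x(1) by (intro member_le_sum_list) auto
    finally show ?thesis .
  qed (auto simp: OPT_t_eq_0 intro!: sum_list_nonneg)
  then have "OPT_t J t \<le> \<bar>?g t\<bar>" for t
    using abs_ge_self order_trans by blast
  then show "AE t in lborel. norm (real (OPT_t J t)) \<le> norm (?g t)"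
    by simp
qed

lemma sum_size_dur_le_OPT:
  assumes valid: "valid_instance J"
  shows "(\<Sum>x\<leftarrow>J. sz x * dur x) \<le> OPT J"
proof -
  have "\<forall>x\<in>set J. 0 \<le> dur x + 0"
    using valid unfolding valid_instance_def by (simp add: less_imp_le)
  from has_bochner_integral_lifetimes[OF this, of sz]
  have "has_bochner_integral lborel (load J) (\<Sum>x\<leftarrow>J. sz x * dur x)"
    unfolding load_eq_lifetimes by simp
  then have "(\<Sum>x\<leftarrow>J. sz x * dur x) = integral\<^sup>L lborel (load J)" and "integrable lborel (load J)"
    by (simp_all add: has_bochner_integral_integral_eq integrable.intros)
  moreover have "integral\<^sup>L lborel (load J) \<le> OPT J"
    unfolding OPT_def using integrable_OPT_t[OF valid] load_le_OPT_t[OF valid]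
    by (intro integral_mono) (simp_all add: \<open>integrable lborel (load J)\<close>)
  ultimately show ?thesis
    by simp
qed

definition stretched_load :: "real \<Rightarrow> item list \<Rightarrow> real \<Rightarrow> real" where
  "stretched_load m J t = (\<Sum>x\<leftarrow>J. sz x * indicator {arr x ..< arr x + dur x + m} t)"

lemma arr_small_part [simp]: "arr (small_part C x) = arr x"
  by (simp add: small_part_def first_migration_def arr_def)

lemma sz_small_part [simp]: "sz (small_part C x) = sz x"
  by (simp add: small_part_def first_migration_def sz_def)

lemma dur_small_part_le: "dur (small_part C x) \<le> dur x"
  and dur_small_part_le_sqrt: "dur (small_part C x) \<le> sqrt C"
  by (simp_all add: small_part_def first_migration_def dur_def arr_def)

lemma present_small_partD: "present (small_part C x) t \<Longrightarrow> present x t"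
  using dur_small_part_le[of C x] unfolding present_def by simp

lemma big_count_sort_key: "big_count (sort_key f J) t = big_count J t"
  unfolding big_count_def by (simp flip: size_mset)

lemma load_sort_key: "load (sort_key f J) t = load J t"
  unfolding load_def by (simp flip: sum_mset_sum_list)

lemma big_count_small_parts_le: "big_count (small_parts C J) t \<le> big_count J t"
  unfolding big_count_def small_parts_def by (induction J) (auto dest: present_small_partD)

lemma load_small_parts_le_stretched_load:
  assumes valid: "valid_instance J" and "s \<le> t" "t < s + sqrt C"
  shows "load (small_parts C J) s \<le> stretched_load (sqrt C) J t"
proof -
  have "(if present (small_part C x) s then sz x else 0)
      \<le> sz x * indicator {arr x ..< arr x + dur x + sqrt C} t" if "x \<in> set J" for x
  proof -
    have "0 \<le> sz x"
      using valid that unfolding valid_instance_def by simp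
    moreover have "t \<in> {arr x ..< arr x + dur x + sqrt C}" if "present (small_part C x) s"
      using that assms(2,3) dur_small_part_le[of C x] unfolding present_def by simp
    ultimately show ?thesis
      by auto
  qed
  then show ?thesis
    unfolding load_def stretched_load_def small_parts_def map_map comp_def sz_small_part
    by (rule sum_list_mono)
qed

lemma ff_open_bins_small_parts_le:
  assumes valid: "valid_instance J"
  shows "ff_open_bins (small_parts C J) t \<le> 2 * real (OPT_t J t) + 2 * stretched_load (sqrt C) J t"
proof -
  let ?L = "sort_key arr (small_parts C J)"
  have nonneg: "\<forall>x\<in>set ?L. 0 \<le> sz x"
    using valid by (auto simp: small_parts_def valid_instance_def)
  have big: "real (big_count ?L t) \<le> OPT_t J t"
    unfolding big_count_sort_key of_nat_le_iff
    by (rule le_trans[OF big_count_small_parts_le big_count_le_OPT_t[OF valid]])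
  have stretched_nonneg: "0 \<le> stretched_load (sqrt C) J t"
    using valid unfolding stretched_load_def valid_instance_def by (auto intro!: sum_list_nonneg)
  have card_eq: "ff_open_bins (small_parts C J) t = card (ff_open ?L t)"
    by (rule ff_open_bins_eq)
  consider "card (ff_open ?L t) \<le> big_count ?L t"
    | y where "y \<in> set ?L" "present y t"
        "card (ff_open ?L t) \<le> real (big_count ?L t) + 1 + 2 * load ?L (arr y)"
    using card_ff_open_le[OF sorted_sort_key nonneg, of t] by auto
  then show ?thesis
  proof cases
    case 1
    then have "real (card (ff_open ?L t)) \<le> OPT_t J t"
      using big by simp
    then show ?thesis
      using stretched_nonneg unfolding card_eq by simp
  next
    case (2 y)
    then have "y \<in> small_part C ` set J"
      by (simp add: small_parts_def)
    then obtain x where x: "x \<in> set J" "y = small_part C x"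
      by blast
    then have "1 \<le> real (OPT_t J t)"
      using OPT_t_pos[OF valid x(1)] present_small_partD 2(2) by (simp add: Suc_le_eq)
    moreover have "load ?L (arr y) \<le> stretched_load (sqrt C) J t"
      using 2(2) dur_small_part_le_sqrt[of C x] x(2) unfolding load_sort_key present_def
      by (intro load_small_parts_le_stretched_load[OF valid]) auto
    ultimately have "real (big_count ?L t) + 1 + 2 * load ?L (arr y)
        \<le> OPT_t J t + OPT_t J t + 2 * stretched_load (sqrt C) J t"
      using big by (intro add_mono) auto
    with 2(3) have "real (card (ff_open ?L t))
        \<le> OPT_t J t + OPT_t J t + 2 * stretched_load (sqrt C) J t"
      by (rule order_trans)
    then show ?thesis
      unfolding card_eq by simp
  qed
qed

lemma sum_size_stretched_dur_le:
  assumes "\<forall>x\<in>set J. 0 \<le> sz x \<and> 1 \<le> dur x" and "0 \<le> m"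
  shows "(\<Sum>x\<leftarrow>J. sz x * (dur x + m)) \<le> (1 + m) * (\<Sum>x\<leftarrow>J. sz x * dur x)"
proof -
  have "sz x * (dur x + m) \<le> (1 + m) * (sz x * dur x)" if "x \<in> set J" for x
  proof -
    have "sz x * m \<le> sz x * m * dur x"
      using assms that mult_left_mono[of 1 "dur x" "sz x * m"] by simp
    then show ?thesis
      by (simp add: algebra_simps)
  qed
  then show ?thesis
    unfolding sum_list_const_mult[symmetric] by (rule sum_list_mono)
qed

lemma FirstFit_small_parts_le:
  assumes valid: "valid_instance J" and "0 \<le> C"
  shows "FirstFit (small_parts C J) \<le> 2 * OPT J + 2 * (\<Sum>x\<leftarrow>J. sz x * (dur x + sqrt C))"
proof -
  have stretch_nonneg: "\<forall>x\<in>set J. 0 \<le> dur x + sqrt C"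
    using valid \<open>0 \<le> C\<close> unfolding valid_instance_def by (simp add: less_imp_le)
  from has_bochner_integral_lifetimes[OF this, of sz]
  have stretched: "integrable lborel (stretched_load (sqrt C) J)"
    "integral\<^sup>L lborel (stretched_load (sqrt C) J) = (\<Sum>x\<leftarrow>J. sz x * (dur x + sqrt C))"
    unfolding stretched_load_def[abs_def] by (simp_all add: integrable.intros has_bochner_integral_integral_eq)
  show ?thesis
  proof (cases "integrable lborel (\<lambda>t. real (ff_open_bins (small_parts C J) t))")
    case True
    then have "FirstFit (small_parts C J)
        \<le> integral\<^sup>L lborel (\<lambda>t. 2 * real (OPT_t J t) + 2 * stretched_load (sqrt C) J t)"
      unfolding FirstFit_def using integrable_OPT_t[OF valid] stretched(1)
      by (intro integral_mono ff_open_bins_small_parts_le[OF valid]) auto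
    then show ?thesis
      unfolding OPT_def using integrable_OPT_t[OF valid] stretched by simp
  next
    case False
    text \<open>The Bochner integral then has the junk value 0.\<close>
    then have "FirstFit (small_parts C J) = 0"
      unfolding FirstFit_def by (rule not_integrable_integral_eq)
    moreover have "0 \<le> (\<Sum>x\<leftarrow>J. sz x * (dur x + sqrt C))"
      using stretch_nonneg valid unfolding valid_instance_def by (auto intro!: sum_list_nonneg)
    ultimately show ?thesis
      unfolding OPT_def by simp
  qed
qed

theorem lemma16:
  shows "\<exists>K::real. \<forall>C::real. \<forall>J::item list.
           1 \<le> C \<longrightarrow> valid_instance J \<longrightarrow> (\<forall>x\<in>set J. 1 \<le> dur x) \<longrightarrow>
           FirstFit (small_parts C J) \<le> K * sqrt C * OPT J"
proof (intro exI[of _ 6] allI impI)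
  fix C :: real and J :: "item list"
  assume "1 \<le> C" and valid: "valid_instance J" and long: "\<forall>x\<in>set J. 1 \<le> dur x"
  then have "1 \<le> sqrt C" and "0 \<le> OPT J"
    unfolding OPT_def by simp_all
  have "\<forall>x\<in>set J. 0 \<le> sz x \<and> 1 \<le> dur x"
    using valid long unfolding valid_instance_def by simp
  then have "(\<Sum>x\<leftarrow>J. sz x * (dur x + sqrt C)) \<le> (1 + sqrt C) * (\<Sum>x\<leftarrow>J. sz x * dur x)"
    using \<open>1 \<le> sqrt C\<close> by (intro sum_size_stretched_dur_le) auto
  also have "\<dots> \<le> (1 + sqrt C) * OPT J"
    using sum_size_dur_le_OPT[OF valid] \<open>1 \<le> sqrt C\<close> by (intro mult_left_mono) auto
  finally have "(\<Sum>x\<leftarrow>J. sz x * (dur x + sqrt C)) \<le> (1 + sqrt C) * OPT J" .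
  moreover have "FirstFit (small_parts C J) \<le> 2 * OPT J + 2 * (\<Sum>x\<leftarrow>J. sz x * (dur x + sqrt C))"
    using FirstFit_small_parts_le[OF valid, of C] \<open>1 \<le> C\<close> by simp
  ultimately have "FirstFit (small_parts C J) \<le> 2 * OPT J + 2 * ((1 + sqrt C) * OPT J)"
    by linarith
  also have "\<dots> = (4 + 2 * sqrt C) * OPT J"
    by (simp add: algebra_simps)
  also have "\<dots> \<le> 6 * sqrt C * OPT J"
    using \<open>1 \<le> sqrt C\<close> \<open>0 \<le> OPT J\<close> by (intro mult_right_mono) auto
  finally show "FirstFit (small_parts C J) \<le> 6 * sqrt C * OPT J" .
qed

end
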